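(* Let $G$ be a group with identity $e$, $A$ a set with at least two elements, and $\tau : A^G \to A^G$ a non-constant cellular automaton with minimal local map $\mu : A^S \to A$. Then $\tau$ is lazy if and only if $e \in S$ and $\mu$ has a unique active transition, i.e., there is exactly one $z \in A^S$ with $\mu(z) \neq z(e)$.
   Context: $A^G$ is the set of maps $G \to A$ with shift action $(g\cdot x)(h) := x(hg)$. A cellular automaton is a map $\tau : A^G \to A^G$ with a finite $S \subseteq G$ (a neighborhood) and local map $\mu : A^S \to A$ such that $\tau(x)(g) = \mu((g\cdot x)|_S)$ for all $x, g$. The minimal neighborhood of $\tau$ is the (unique) neighborhood of smallest cardinality, and the minimal local map is the local defining map on the minimal neighborhood. $\tau$ is lazy if there is a local defining map $\mu : A^S \to A$ for $\tau$ with $e \in S$ and $p \in A^S$ such that for all $z \in A^S$: $\mu(z) = z(e)$ iff $z \neq p$. An active transition of $\mu : A^S \to A$ (with $e \in S$) is a pattern $z \in A^S$ with $\mu(z) \neq z(e)$. *)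

theory Defs
  imports "HOL-Library.FuncSet"
begin

text \<open>The group G is a type of class group_add (written additively: identity 0,
  product g h rendered as h + g ordering kept as in the paper, i.e. hg is h + g).
  Configurations are functions 'g => 'a; patterns in A^S are extensional
  functions in S ->E UNIV.\<close>

definition shift :: "'g::group_add \<Rightarrow> ('g \<Rightarrow> 'a) \<Rightarrow> ('g \<Rightarrow> 'a)" where
  "shift g x = (\<lambda>h. x (h + g))"

definition is_local_map ::
  "(('g::group_add \<Rightarrow> 'a) \<Rightarrow> ('g \<Rightarrow> 'a)) \<Rightarrow> 'g set \<Rightarrow> (('g \<Rightarrow> 'a) \<Rightarrow> 'a) \<Rightarrow> bool" where
  "is_local_map \<tau> S \<mu> \<longleftrightarrow> finite S \<and> (\<forall>x g. \<tau> x g = \<mu> (restrict (shift g x) S))"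

definition cellular_automaton :: "(('g::group_add \<Rightarrow> 'a) \<Rightarrow> ('g \<Rightarrow> 'a)) \<Rightarrow> bool" where
  "cellular_automaton \<tau> \<longleftrightarrow> (\<exists>S \<mu>. is_local_map \<tau> S \<mu>)"

definition is_neighborhood :: "(('g::group_add \<Rightarrow> 'a) \<Rightarrow> ('g \<Rightarrow> 'a)) \<Rightarrow> 'g set \<Rightarrow> bool" where
  "is_neighborhood \<tau> S \<longleftrightarrow> (\<exists>\<mu>. is_local_map \<tau> S \<mu>)"

definition minimal_neighborhood :: "(('g::group_add \<Rightarrow> 'a) \<Rightarrow> ('g \<Rightarrow> 'a)) \<Rightarrow> 'g set \<Rightarrow> bool" where
  "minimal_neighborhood \<tau> S \<longleftrightarrow> is_neighborhood \<tau> S \<and>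
     (\<forall>S'. is_neighborhood \<tau> S' \<longrightarrow> card S \<le> card S')"

definition lazy :: "(('g::group_add \<Rightarrow> 'a) \<Rightarrow> ('g \<Rightarrow> 'a)) \<Rightarrow> bool" where
  "lazy \<tau> \<longleftrightarrow> (\<exists>S \<mu> p. is_local_map \<tau> S \<mu> \<and> 0 \<in> S \<and> p \<in> S \<rightarrow>\<^sub>E UNIV \<and>
      (\<forall>z \<in> S \<rightarrow>\<^sub>E UNIV. \<mu> z = z 0 \<longleftrightarrow> z \<noteq> p))"

definition active_transition :: "'g::group_add set \<Rightarrow> (('g \<Rightarrow> 'a) \<Rightarrow> 'a) \<Rightarrow> ('g \<Rightarrow> 'a) \<Rightarrow> bool" where
  "active_transition S \<mu> z \<longleftrightarrow> z \<in> S \<rightarrow>\<^sub>E UNIV \<and> \<mu> z \<noteq> z 0"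

end

theory Submission
  imports Defs
begin

text \<open>Neighborhoods are closed under intersection, so the minimal neighborhood \<open>S\<close> lies inside
  the neighborhood \<open>S'\<close> of any lazy local map \<open>\<mu>'\<close>, say with exceptional pattern \<open>p\<close>.
  A lazy map copies the value at \<open>0\<close> on all patterns but one, so \<open>\<tau> x 0\<close> genuinely depends
  on \<open>x 0\<close> unless \<open>S' = {0}\<close>; in that case \<open>S\<close> is \<open>{0}\<close> or empty, and \<open>S = {}\<close> would make
  \<open>\<tau>\<close> constant. Hence \<open>0 \<in> S\<close>. Since \<open>\<mu>\<close> and \<open>\<mu>'\<close> both compute \<open>\<tau> x 0\<close>, restricting to \<open>S\<close>
  and extending by \<open>undefined\<close> outside \<open>S\<close> carry active transitions of one map to active
  transitions of the other, so \<open>p\<close> is also the only active transition of \<open>\<mu>\<close>.\<close>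

lemma shift_zero [simp]: "shift (0::'g::group_add) x = x"
  by (simp add: shift_def)

lemma local_map_apply_zero:
  assumes "is_local_map \<tau> S \<mu>"
  shows "\<tau> x 0 = \<mu> (restrict x S)"
  using assms unfolding is_local_map_def by (metis shift_zero)

lemma local_map_shift:
  assumes "is_local_map \<tau> S \<mu>"
  shows "\<tau> x g = \<tau> (shift g x) 0"
  using assms by (simp add: is_local_map_def)

lemma local_map_PiE:
  assumes "is_local_map \<tau> S \<mu>" and "z \<in> S \<rightarrow>\<^sub>E UNIV"
  shows "\<mu> z = \<tau> z 0"
  using local_map_apply_zero[OF assms(1)] assms(2) by (simp add: PiE_restrict)

lemma local_map_cong:
  assumes "is_local_map \<tau> S \<mu>" and "\<And>h. h \<in> S \<Longrightarrow> x h = y h"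
  shows "\<tau> x 0 = \<tau> y 0"
proof -
  have "restrict x S = restrict y S"
    using assms(2) by (rule restrict_ext)
  then show ?thesis
    using local_map_apply_zero[OF assms(1)] by metis
qed

lemma local_map_Int:
  fixes \<tau> :: "('g::group_add \<Rightarrow> 'a) \<Rightarrow> ('g \<Rightarrow> 'a)"
  assumes S\<^sub>1: "is_local_map \<tau> S\<^sub>1 \<mu>\<^sub>1" and S\<^sub>2: "is_local_map \<tau> S\<^sub>2 \<mu>\<^sub>2"
  shows "is_local_map \<tau> (S\<^sub>1 \<inter> S\<^sub>2) (\<lambda>z. \<tau> z 0)"
  unfolding is_local_map_def
proof (intro conjI allI)
  show "finite (S\<^sub>1 \<inter> S\<^sub>2)"
    using S\<^sub>1 by (simp add: is_local_map_def)
  fix x :: "'g \<Rightarrow> 'a" and g :: 'g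
  define y where "y = shift g x"
  define r where "r = restrict y (S\<^sub>1 \<inter> S\<^sub>2)"
  \<comment> \<open>agrees with \<open>y\<close> on \<open>S\<^sub>1\<close> and with \<open>r\<close> on \<open>S\<^sub>2\<close>\<close>
  define w where "w = (\<lambda>h. if h \<in> S\<^sub>1 then y h else r h)"
  have "\<tau> x g = \<tau> y 0"
    using local_map_shift[OF S\<^sub>1] by (simp add: y_def)
  also have "\<dots> = \<tau> w 0"
    by (rule local_map_cong[OF S\<^sub>1]) (simp add: w_def)
  also have "\<dots> = \<tau> r 0"
    by (rule local_map_cong[OF S\<^sub>2]) (simp add: w_def r_def)
  finally show "\<tau> x g = \<tau> (restrict (shift g x) (S\<^sub>1 \<inter> S\<^sub>2)) 0"
    by (simp add: r_def y_def)
qed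

lemma local_map_empty_constant:
  assumes "is_local_map \<tau> {} \<mu>"
  shows "\<tau> x = \<tau> y"
  using assms by (simp add: is_local_map_def fun_eq_iff restrict_def)

lemma minimal_neighborhood_subset:
  assumes "minimal_neighborhood \<tau> S" and "is_local_map \<tau> S' \<mu>'"
  shows "S \<subseteq> S'"
proof -
  obtain \<mu> where \<mu>: "is_local_map \<tau> S \<mu>"
    using assms(1) unfolding minimal_neighborhood_def is_neighborhood_def by blast
  have "is_neighborhood \<tau> (S \<inter> S')"
    using local_map_Int[OF \<mu> assms(2)] unfolding is_neighborhood_def by blast
  then have "card S \<le> card (S \<inter> S')"
    using assms(1) unfolding minimal_neighborhood_def by blast
  moreover have "finite S"
    using \<mu> by (simp add: is_local_map_def)
  ultimately have "S \<inter> S' = S"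
    by (metis Int_lower1 card_seteq)
  then show ?thesis
    by blast
qed

lemma lazy_local_map_sensitive_at_zero:
  fixes \<tau> :: "('g::group_add \<Rightarrow> 'a) \<Rightarrow> ('g \<Rightarrow> 'a)" and a b :: 'a
  assumes \<mu>: "is_local_map \<tau> S \<mu>" and p: "p \<in> S \<rightarrow>\<^sub>E UNIV"
    and lazy: "\<forall>z \<in> S \<rightarrow>\<^sub>E UNIV. \<mu> z = z 0 \<longleftrightarrow> z \<noteq> p"
    and "0 \<in> S" "s \<in> S" "s \<noteq> 0" "a \<noteq> b"
  shows "\<exists>x y. (\<forall>h. h \<noteq> 0 \<longrightarrow> x h = y h) \<and> \<tau> x 0 \<noteq> \<tau> y 0"
proof -
  obtain c where c: "c \<noteq> p s"
    using \<open>a \<noteq> b\<close> by metis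
  define z where "z = p(s := c)"
  obtain d where d: "d \<noteq> z 0"
    using \<open>a \<noteq> b\<close> by metis
  define z' where "z' = z(0 := d)"
  \<comment> \<open>both patterns differ from \<open>p\<close> at \<open>s\<close>, so \<open>\<mu>\<close> copies their values at \<open>0\<close>\<close>
  have "z \<in> S \<rightarrow>\<^sub>E UNIV" "z \<noteq> p"
    using p c \<open>s \<in> S\<close> by (auto simp: z_def PiE_def extensional_def dest: fun_cong[where x = s])
  then have "\<tau> z 0 = z 0"
    using lazy local_map_PiE[OF \<mu>] by metis
  have "z' \<in> S \<rightarrow>\<^sub>E UNIV" "z' \<noteq> p"
    using \<open>z \<in> S \<rightarrow>\<^sub>E UNIV\<close> \<open>0 \<in> S\<close> c \<open>s \<noteq> 0\<close>
    by (auto simp: z'_def z_def PiE_def extensional_def dest: fun_cong[where x = s])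
  then have "\<tau> z' 0 = d"
    using lazy local_map_PiE[OF \<mu>] by (metis fun_upd_same z'_def)
  have "\<forall>h. h \<noteq> 0 \<longrightarrow> z h = z' h"
    by (simp add: z'_def)
  with \<open>\<tau> z 0 = z 0\<close> \<open>\<tau> z' 0 = d\<close> d show ?thesis
    by metis
qed

lemma lazy_zero_mem_neighborhood:
  fixes \<tau> :: "('g::group_add \<Rightarrow> 'a) \<Rightarrow> ('g \<Rightarrow> 'a)"
  assumes "\<exists>a b :: 'a. a \<noteq> b" and "\<exists>x y. \<tau> x \<noteq> \<tau> y" and "lazy \<tau>"
    and T: "is_local_map \<tau> T \<nu>"
  shows "0 \<in> T"
proof (rule ccontr)
  assume "0 \<notin> T"
  obtain S \<mu> p where \<mu>: "is_local_map \<tau> S \<mu>" and "0 \<in> S" and p: "p \<in> S \<rightarrow>\<^sub>E UNIV"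
    and lazy: "\<forall>z \<in> S \<rightarrow>\<^sub>E UNIV. \<mu> z = z 0 \<longleftrightarrow> z \<noteq> p"
    using \<open>lazy \<tau>\<close> unfolding lazy_def by blast
  show False
  proof (cases "S \<subseteq> {0}")
    case True
    with \<open>0 \<notin> T\<close> have "S \<inter> T = {}"
      by blast
    with local_map_Int[OF \<mu> T] have "is_local_map \<tau> {} (\<lambda>z. \<tau> z 0)"
      by simp
    with \<open>\<exists>x y. \<tau> x \<noteq> \<tau> y\<close> show False
      using local_map_empty_constant by blast
  next
    case False
    then obtain s where "s \<in> S" "s \<noteq> 0"
      by blast
    then obtain x y where "\<forall>h. h \<noteq> 0 \<longrightarrow> x h = y h" and "\<tau> x 0 \<noteq> \<tau> y 0"
      using lazy_local_map_sensitive_at_zero[OF \<mu> p lazy \<open>0 \<in> S\<close>] assms(1) by metis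
    moreover have "\<tau> x 0 = \<tau> y 0" if "\<forall>h. h \<noteq> 0 \<longrightarrow> x h = y h"
      using local_map_cong[OF T] that \<open>0 \<notin> T\<close> by metis
    ultimately show False
      by blast
  qed
qed

lemma active_transition_restrict:
  assumes \<mu>: "is_local_map \<tau> S \<mu>" and \<mu>': "is_local_map \<tau> S' \<mu>'" and "0 \<in> S"
    and "active_transition S' \<mu>' z"
  shows "active_transition S \<mu> (restrict z S)"
proof -
  have "\<mu> (restrict z S) = \<tau> z 0"
    using local_map_apply_zero[OF \<mu>] by (simp add: restrict_def)
  also have "\<dots> = \<mu>' z"
    using assms(4) local_map_PiE[OF \<mu>'] by (simp add: active_transition_def)
  finally show ?thesis
    using assms(4) \<open>0 \<in> S\<close> by (simp add: active_transition_def)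
qed

lemma active_transition_mono:
  assumes \<mu>: "is_local_map \<tau> S \<mu>" and \<mu>': "is_local_map \<tau> S' \<mu>'" and "S \<subseteq> S'"
    and "active_transition S \<mu> z"
  shows "active_transition S' \<mu>' z"
proof -
  have "z \<in> S \<rightarrow>\<^sub>E UNIV"
    using assms(4) by (simp add: active_transition_def)
  then have "z \<in> S' \<rightarrow>\<^sub>E UNIV"
    using \<open>S \<subseteq> S'\<close> by (auto simp: PiE_def extensional_def)
  with \<open>z \<in> S \<rightarrow>\<^sub>E UNIV\<close> have "\<mu>' z = \<mu> z"
    using local_map_PiE[OF \<mu>] local_map_PiE[OF \<mu>'] by simp
  with \<open>z \<in> S' \<rightarrow>\<^sub>E UNIV\<close> show ?thesis
    using assms(4) by (simp add: active_transition_def)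
qed

theorem proposition1:
  fixes \<tau> :: "('g::group_add \<Rightarrow> 'a) \<Rightarrow> ('g \<Rightarrow> 'a)"
    and S :: "'g set" and \<mu> :: "('g \<Rightarrow> 'a) \<Rightarrow> 'a"
  assumes "\<exists>a b :: 'a. a \<noteq> b"
    and "cellular_automaton \<tau>"
    and "\<exists>x y. \<tau> x \<noteq> \<tau> y"
    and "minimal_neighborhood \<tau> S"
    and "is_local_map \<tau> S \<mu>"
  shows "lazy \<tau> \<longleftrightarrow> 0 \<in> S \<and> (\<exists>!z. active_transition S \<mu> z)"
proof
  assume "0 \<in> S \<and> (\<exists>!z. active_transition S \<mu> z)"
  then show "lazy \<tau>"
    unfolding lazy_def active_transition_def using assms(5) by blast
next
  assume "lazy \<tau>"
  then obtain S' \<mu>' p where \<mu>': "is_local_map \<tau> S' \<mu>'" and "p \<in> S' \<rightarrow>\<^sub>E UNIV"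
    and "\<forall>z \<in> S' \<rightarrow>\<^sub>E UNIV. \<mu>' z = z 0 \<longleftrightarrow> z \<noteq> p"
    unfolding lazy_def by blast
  then have active': "active_transition S' \<mu>' z \<longleftrightarrow> z = p" for z
    unfolding active_transition_def by blast
  have "0 \<in> S"
    using lazy_zero_mem_neighborhood[OF assms(1,3) \<open>lazy \<tau>\<close> assms(5)] .
  have "S \<subseteq> S'"
    using minimal_neighborhood_subset[OF assms(4) \<mu>'] .
  have "active_transition S \<mu> (restrict p S)"
    using active_transition_restrict[OF assms(5) \<mu>' \<open>0 \<in> S\<close>] active' by blast
  moreover have "z = p" if "active_transition S \<mu> z" for z
    using active_transition_mono[OF assms(5) \<mu>' \<open>S \<subseteq> S'\<close> that] active' by blast
  ultimately show "0 \<in> S \<and> (\<exists>!z. active_transition S \<mu> z)"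
    using \<open>0 \<in> S\<close> by blast
qed

end
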